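(* Under the standing setup, define for $x\in\mathcal{B}$ $$f_h(x):=T_x^{-1}\left[T_{P(x)}\,DP_x\,T_x^{-1}\right]^\dagger T_{P(x)}\,g(P(x)).$$ Then $DP_x f_h(x)=g(P(x))$ for every $x\in\mathcal{B}$ (i.e. $f_h$ is a lift of $g$), and $f_h(x)=g(x)$ for every $x\in\mathcal{M}$.
   Context: Standing setup: integers $0<k<n$, $r\ge1$. $\tilde{\mathcal M}$ is a compact connected $k$-dimensional $C^r$ manifold with a $C^r$ vector field $\tilde g$. $\mathcal{B}\subseteq\mathbb{R}^n$ is a connected open set with the Euclidean inner product $\langle\cdot,\cdot\rangle$ and norm $\|\cdot\|$; tangent spaces are identified with $\mathbb{R}^n$. $F:\tilde{\mathcal M}\to\mathcal{B}$ is a proper $C^r$ embedding, $\mathcal{M}:=F(\tilde{\mathcal M})$, and $g$ is the vector field on $\mathcal{M}$ with $g(F(p))=DF_p\tilde g(p)$. (A1) $G:\mathcal{B}\to\mathbb{R}^{n-k}$ is a $C^r$ submersion with $G^{-1}(0)=\mathcal{M}$. (A2) $\tilde P:\mathcal{B}\to\tilde{\mathcal M}$ is $C^r$ with $\tilde P|_{\mathcal M}=F^{-1}$; $P:=F\circ\tilde P:\mathcal{B}\to\mathcal{B}$. (A3) $\mathbb{R}^n=\ker DP_x\oplus\ker DG_x$ for every $x\in\mathcal{B}$. For a linear map $L$ between Euclidean spaces, $L^\dagger$ denotes its Moore–Penrose pseudoinverse. $T_x:=\left[I-DG_x^\dagger DG_x\right]DP_x^\dagger DP_x+DG_x^\dagger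 DG_x$, which is an invertible linear map of $\mathbb{R}^n$ for every $x\in\mathcal{B}$. *)

theory Defs
  imports "HOL-Analysis.Analysis"
begin

definition mp_pinv :: "('a::euclidean_space \<Rightarrow> 'b::euclidean_space) \<Rightarrow> ('b \<Rightarrow> 'a)" where
  "mp_pinv L = (THE L'. linear L' \<and> L \<circ> L' \<circ> L = L \<and> L' \<circ> L \<circ> L' = L'
      \<and> adjoint (L \<circ> L') = L \<circ> L' \<and> adjoint (L' \<circ> L) = L' \<circ> L)"

definition C1_on :: "'a::euclidean_space set \<Rightarrow> ('a \<Rightarrow> 'b::euclidean_space) \<Rightarrow> bool" where
  "C1_on S f \<longleftrightarrow> (\<exists>f'. (\<forall>x\<in>S. (f has_derivative blinfun_apply (f' x)) (at x))
                        \<and> continuous_on S f')"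

definition tangent_space :: "'a::euclidean_space set \<Rightarrow> 'a \<Rightarrow> 'a set" where
  "tangent_space M x = {v. \<exists>\<gamma>::real \<Rightarrow> 'a. \<gamma> 0 = x \<and> (\<forall>t. \<gamma> t \<in> M)
                                \<and> (\<gamma> has_vector_derivative v) (at 0)}"

definition Tmap :: "('a::euclidean_space \<Rightarrow> 'a) \<Rightarrow> ('a \<Rightarrow> 'b::euclidean_space) \<Rightarrow> 'a \<Rightarrow> 'a \<Rightarrow> 'a" where
  "Tmap P G x = (let DP = frechet_derivative P (at x); DG = frechet_derivative G (at x) in
     (\<lambda>v. (mp_pinv DP (DP v) - mp_pinv DG (DG (mp_pinv DP (DP v))))
          + mp_pinv DG (DG v)))"

definition f_h :: "('a::euclidean_space \<Rightarrow> 'a) \<Rightarrow> ('a \<Rightarrow> 'b::euclidean_space) \<Rightarrow> ('a \<Rightarrow> 'a) \<Rightarrow> 'a \<Rightarrow> 'a" where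
  "f_h P G g x = (let DP = frechet_derivative P (at x); Tx = Tmap P G x; TPx = Tmap P G (P x) in
     inv Tx (mp_pinv (TPx \<circ> DP \<circ> inv Tx) (TPx (g (P x)))))"

end

theory Submission
  imports Defs
begin

text \<open>The direct sum ker DP_x \<oplus> ker DG_x makes T_x invertible. By the chain rule
  DP_{P(x)} DP_x = DP_x, and every range DP_x has the dimension of ker DG_x, so
  range DP_x = range DP_{P(x)}; this range contains g(P x), because the derivative of the
  retraction P fixes tangent vectors of M. The pseudoinverse of A = T_{P(x)} DP_x T_x^{-1} is a
  right inverse of A on its range, which gives DP_x f_h(x) = g(P x). On M, DP_x is idempotent
  with range inside ker DG_x; conjugation by T_x turns it into an orthogonal projection, which
  is its own pseudoinverse, so f_h(x) = DP_x g(x) = g(x).\<close>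

section \<open>The Moore--Penrose pseudoinverse\<close>

definition min_norm_least_squares ::
    "('a::euclidean_space \<Rightarrow> 'b::euclidean_space) \<Rightarrow> 'b \<Rightarrow> 'a \<Rightarrow> bool" where
  "min_norm_least_squares L y v \<longleftrightarrow>
     (\<forall>w. L w = 0 \<longrightarrow> v \<bullet> w = 0) \<and> (\<forall>w. (y - L v) \<bullet> L w = 0)"

lemma min_norm_least_squares_unique:
  assumes L: "linear L"
    and v1: "min_norm_least_squares L y v1" and v2: "min_norm_least_squares L y v2"
  shows "v1 = v2"
proof -
  interpret linear L by fact
  have "(y - L v2) \<bullet> L (v1 - v2) - (y - L v1) \<bullet> L (v1 - v2) = 0"
    using v1 v2 unfolding min_norm_least_squares_def by simp
  then have "L (v1 - v2) \<bullet> L (v1 - v2) = 0"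
    by (simp add: diff inner_diff_left)
  then have "L (v1 - v2) = 0" by simp
  then have "v1 \<bullet> (v1 - v2) = 0" "v2 \<bullet> (v1 - v2) = 0"
    using v1 v2 unfolding min_norm_least_squares_def by auto
  then have "(v1 - v2) \<bullet> (v1 - v2) = 0" by (simp add: inner_diff_left)
  then show ?thesis by simp
qed

lemma min_norm_least_squares_exists:
  assumes L: "linear L"
  shows "\<exists>v. min_norm_least_squares L y v"
proof -
  interpret linear L by fact
  have range: "span (range L) = range L" and kernel: "span {x. L x = 0} = {x. L x = 0}"
    by (simp_all add: span_eq_iff linear_subspace_image L linear_subspace_kernel)
  obtain u z where "u \<in> span (range L)" and z: "\<And>w. w \<in> span (range L) \<Longrightarrow> orthogonal z w"
    and yz: "y = u + z"
    using orthogonal_subspace_decomp_exists by metis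
  then obtain w0 where w0: "u = L w0" using range by auto
  obtain a b where a: "a \<in> span {x. L x = 0}"
    and b: "\<And>w. w \<in> span {x. L x = 0} \<Longrightarrow> orthogonal b w" and ab: "w0 = a + b"
    using orthogonal_subspace_decomp_exists by metis
  have "L a = 0" using a kernel by auto
  then have "L b = u" using w0 ab by (simp add: add)
  then have "min_norm_least_squares L y b"
    using b z unfolding min_norm_least_squares_def orthogonal_def yz kernel range by simp
  then show ?thesis ..
qed

definition lsq_pinv :: "('a::euclidean_space \<Rightarrow> 'b::euclidean_space) \<Rightarrow> 'b \<Rightarrow> 'a" where
  "lsq_pinv L y = (SOME v. min_norm_least_squares L y v)"

lemma lsq_pinv_solution: "linear L \<Longrightarrow> min_norm_least_squares L y (lsq_pinv L y)"
  unfolding lsq_pinv_def by (rule someI_ex[OF min_norm_least_squares_exists])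

lemma linear_lsq_pinv:
  assumes L: "linear L"
  shows "linear (lsq_pinv L)"
proof -
  interpret linear L by fact
  note sol = lsq_pinv_solution[OF L]
  have "lsq_pinv L (c *\<^sub>R y1 + y2) = c *\<^sub>R lsq_pinv L y1 + lsq_pinv L y2" for c y1 y2
  proof (rule min_norm_least_squares_unique[OF L sol])
    let ?v = "c *\<^sub>R lsq_pinv L y1 + lsq_pinv L y2"
    have res: "c *\<^sub>R y1 + y2 - L ?v = c *\<^sub>R (y1 - L (lsq_pinv L y1)) + (y2 - L (lsq_pinv L y2))"
      by (simp add: add scale algebra_simps)
    show "min_norm_least_squares L (c *\<^sub>R y1 + y2) ?v"
      unfolding min_norm_least_squares_def
    proof (intro conjI allI impI)
      fix w assume "L w = 0"
      then show "?v \<bullet> w = 0"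
        using sol[of y1] sol[of y2] by (simp add: min_norm_least_squares_def inner_add_left)
    next
      fix w
      have "(y1 - L (lsq_pinv L y1)) \<bullet> L w = 0" "(y2 - L (lsq_pinv L y2)) \<bullet> L w = 0"
        using sol[of y1] sol[of y2] by (simp_all add: min_norm_least_squares_def)
      then show "(c *\<^sub>R y1 + y2 - L ?v) \<bullet> L w = 0"
        unfolding res inner_add_left inner_scaleR_left by simp
    qed
  qed
  from this[of 1] this[of _ _ 0] this[of 1 0 0] show ?thesis
    by unfold_locales (auto intro: linearI)
qed

lemma lsq_pinv_right_inverse:
  assumes L: "linear L"
  shows "L (lsq_pinv L (L x)) = L x"
proof -
  have "(L x - L (lsq_pinv L (L x))) \<bullet> L (x - lsq_pinv L (L x)) = 0"
    using lsq_pinv_solution[OF L, of "L x"] unfolding min_norm_least_squares_def by blast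
  then have "(L x - L (lsq_pinv L (L x))) \<bullet> (L x - L (lsq_pinv L (L x))) = 0"
    by (simp add: linear_diff[OF L])
  then show ?thesis by simp
qed

lemma self_adjoint_iff:
  fixes f :: "'a::euclidean_space \<Rightarrow> 'a"
  assumes "linear f"
  shows "adjoint f = f \<longleftrightarrow> (\<forall>x y. f x \<bullet> y = x \<bullet> f y)"
  using adjoint_works[OF assms] adjoint_unique by metis

lemma mp_pinv_eq_lsq_pinv:
  assumes L: "linear L"
  shows "mp_pinv L = lsq_pinv L"
  unfolding mp_pinv_def
proof (rule the_equality)
  note sol = lsq_pinv_solution[OF L]
  have lin: "linear (lsq_pinv L)" by (rule linear_lsq_pinv[OF L])
  have "lsq_pinv L (L (lsq_pinv L y)) = lsq_pinv L y" for y
    by (rule min_norm_least_squares_unique[OF L sol]) (use sol[of y] in \<open>simp add: min_norm_least_squares_def\<close>)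
  moreover have "L (lsq_pinv L y) \<bullet> z = y \<bullet> L (lsq_pinv L z)" for y z
  proof -
    have "(y - L (lsq_pinv L y)) \<bullet> L (lsq_pinv L z) = 0" "(z - L (lsq_pinv L z)) \<bullet> L (lsq_pinv L y) = 0"
      using sol unfolding min_norm_least_squares_def by blast+
    then have "y \<bullet> L (lsq_pinv L z) = L (lsq_pinv L y) \<bullet> L (lsq_pinv L z)"
      "z \<bullet> L (lsq_pinv L y) = L (lsq_pinv L z) \<bullet> L (lsq_pinv L y)"
      by (simp_all add: inner_diff_left)
    then show ?thesis by (simp add: inner_commute)
  qed
  moreover have "lsq_pinv L (L x) \<bullet> w = x \<bullet> lsq_pinv L (L w)" for x w
  proof -
    have "L (w - lsq_pinv L (L w)) = 0" "L (x - lsq_pinv L (L x)) = 0"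
      by (simp_all add: linear_diff[OF L] lsq_pinv_right_inverse[OF L])
    then have "lsq_pinv L (L x) \<bullet> (w - lsq_pinv L (L w)) = 0"
      "lsq_pinv L (L w) \<bullet> (x - lsq_pinv L (L x)) = 0"
      using sol unfolding min_norm_least_squares_def by blast+
    then show ?thesis by (simp add: inner_diff_right inner_commute)
  qed
  ultimately show "linear (lsq_pinv L) \<and> L \<circ> lsq_pinv L \<circ> L = L
      \<and> lsq_pinv L \<circ> L \<circ> lsq_pinv L = lsq_pinv L
      \<and> adjoint (L \<circ> lsq_pinv L) = L \<circ> lsq_pinv L \<and> adjoint (lsq_pinv L \<circ> L) = lsq_pinv L \<circ> L"
    using lin lsq_pinv_right_inverse[OF L]
    by (simp add: self_adjoint_iff linear_compose L) (simp add: fun_eq_iff)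
next
  fix L' assume L': "linear L' \<and> L \<circ> L' \<circ> L = L \<and> L' \<circ> L \<circ> L' = L'
      \<and> adjoint (L \<circ> L') = L \<circ> L' \<and> adjoint (L' \<circ> L) = L' \<circ> L"
  then have lin: "linear L'" by blast
  have sym1: "L (L' a) \<bullet> b = a \<bullet> L (L' b)" for a b
    using L' self_adjoint_iff[OF linear_compose[OF lin L]] by simp
  have sym2: "L' (L a) \<bullet> b = a \<bullet> L' (L b)" for a b
    using L' self_adjoint_iff[OF linear_compose[OF L lin]] by simp
  have LL'L: "L (L' (L a)) = L a" and L'LL': "L' (L (L' b)) = L' b" for a b
    using L' by (simp_all add: fun_eq_iff)
  have "min_norm_least_squares L y (L' y)" for y
    unfolding min_norm_least_squares_def
  proof (intro conjI allI impI)
    fix w assume "L w = 0"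
    then show "L' y \<bullet> w = 0"
      using sym2[of "L' y" w] L'LL'[of y] linear_0[OF lin] by simp
  next
    fix w
    show "(y - L (L' y)) \<bullet> L w = 0"
      using sym1[of y "L w"] LL'L[of w] by (simp add: inner_diff_left)
  qed
  then show "L' = lsq_pinv L"
    by (intro ext min_norm_least_squares_unique[OF L _ lsq_pinv_solution[OF L]])
qed

lemma mp_pinv_solution: "linear L \<Longrightarrow> min_norm_least_squares L y (mp_pinv L y)"
  by (simp add: mp_pinv_eq_lsq_pinv lsq_pinv_solution)

lemma linear_mp_pinv: "linear L \<Longrightarrow> linear (mp_pinv L)"
  by (simp add: mp_pinv_eq_lsq_pinv linear_lsq_pinv)

lemma mp_pinv_right_inverse: "linear L \<Longrightarrow> y \<in> range L \<Longrightarrow> L (mp_pinv L y) = y"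
  by (auto simp: mp_pinv_eq_lsq_pinv lsq_pinv_right_inverse)

lemma mp_pinv_orthogonal_kernel: "linear L \<Longrightarrow> L w = 0 \<Longrightarrow> mp_pinv L y \<bullet> w = 0"
  using mp_pinv_solution unfolding min_norm_least_squares_def by blast

lemma mp_pinv_orthogonal_projection:
  fixes L :: "'a::euclidean_space \<Rightarrow> 'a"
  assumes L: "linear L" and idem: "\<And>x. L (L x) = L x" and sym: "\<And>x y. L x \<bullet> y = x \<bullet> L y"
  shows "mp_pinv L y = L y"
proof (rule min_norm_least_squares_unique[OF L mp_pinv_solution[OF L]])
  have "(y - L (L y)) \<bullet> L w = L (y - L (L y)) \<bullet> w" for w by (simp add: sym)
  then show "min_norm_least_squares L y (L y)"
    unfolding min_norm_least_squares_def by (simp add: sym linear_diff[OF L] idem)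
qed

lemma mp_pinv_conj_right_inverse:
  fixes A R :: "'a::euclidean_space \<Rightarrow> 'a" and S :: "'a \<Rightarrow> 'b::euclidean_space"
  assumes A: "linear A" and R: "linear R" "inj R" and S: "linear S" "inj S" and y: "y \<in> range A"
  shows "A (inv R (mp_pinv (S \<circ> A \<circ> inv R) (S y))) = y"
proof -
  let ?C = "S \<circ> A \<circ> inv R"
  have C: "linear ?C" using A R S by (intro linear_compose inj_linear_imp_inv_linear)
  obtain u where u: "y = A u" using y by blast
  then have "S y = ?C (R u)" using R by (simp add: inv_f_f)
  then have "S (A (inv R (mp_pinv ?C (S y)))) = S y"
    using mp_pinv_right_inverse[OF C, of "S y"] by simp
  then show ?thesis using S by (simp add: inj_eq)
qed

lemma mp_pinv_conj_projection:
  fixes A R :: "'a::euclidean_space \<Rightarrow> 'a"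
  assumes A: "linear A" "\<And>v. A (A v) = A v" and R: "linear R" "inj R"
    and self_adjoint: "\<And>x y. R (A (inv R x)) \<bullet> y = x \<bullet> R (A (inv R y))"
  shows "inv R (mp_pinv (R \<circ> A \<circ> inv R) (R y)) = A y"
proof -
  let ?C = "R \<circ> A \<circ> inv R"
  have "linear ?C" using A R by (intro linear_compose inj_linear_imp_inv_linear)
  moreover have "?C (?C x) = ?C x" for x using A R by (simp add: inv_f_f)
  ultimately have "mp_pinv ?C (R y) = ?C (R y)"
    using self_adjoint by (intro mp_pinv_orthogonal_projection) auto
  then show ?thesis using R by (simp add: inv_f_f)
qed

lemma rank_nullity:
  fixes f :: "'a::euclidean_space \<Rightarrow> 'b::euclidean_space"
  assumes f: "linear f"
  shows "dim {x. f x = 0} + dim (range f) = DIM('a)"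
proof -
  define K where "K = {x. f x = 0}"
  define C where "C = {y. \<forall>x\<in>K. orthogonal x y}"
  have K: "subspace K" unfolding K_def by (rule linear_subspace_kernel[OF f])
  have C: "subspace C" unfolding C_def orthogonal_def by (auto simp: subspace_def inner_add_right)
  have spans: "span K = K" "span C = C" using K C by (simp_all add: span_eq_iff)
  have "dim C + dim K = DIM('a)"
    using dim_subspace_orthogonal_to_vectors[OF K subspace_UNIV] by (simp add: C_def)
  moreover have "range f = f ` C"
  proof (intro equalityI subsetI)
    fix y assume "y \<in> range f"
    then obtain u where u: "y = f u" by blast
    obtain a c where "a \<in> span K" "\<And>w. w \<in> span K \<Longrightarrow> orthogonal c w" "u = a + c"
      using orthogonal_subspace_decomp_exists by metis
    then have "a \<in> K" "c \<in> C" "u = a + c"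
      unfolding spans C_def by (auto simp: orthogonal_commute)
    then show "y \<in> f ` C" using u by (auto simp: K_def linear_add[OF f])
  qed auto
  moreover have "inj_on f (span C)"
  proof (rule inj_onI)
    fix x y assume "x \<in> span C" "y \<in> span C" "f x = f y"
    then have "x - y \<in> K" "x - y \<in> C"
      using C unfolding spans by (auto simp: K_def linear_diff[OF f] subspace_diff)
    then have "(x - y) \<bullet> (x - y) = 0" unfolding C_def orthogonal_def by blast
    then show "x = y" by simp
  qed
  ultimately show ?thesis using dim_image_eq[OF f] unfolding K_def by simp
qed

lemma range_eq_if_absorbing:
  fixes A :: "'a::euclidean_space \<Rightarrow> 'b::euclidean_space" and B :: "'b \<Rightarrow> 'b"
  assumes A: "linear A" and B: "linear B" and absorb: "\<And>v. B (A v) = A v"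
    and dim: "dim (range B) \<le> dim (range A)"
  shows "range A = range B"
proof (rule subspace_dim_equal)
  show "range A \<subseteq> range B" by (metis absorb image_subsetI rangeI)
qed (simp_all add: linear_subspace_image A B dim)

section \<open>The conjugating map \<open>T\<close>\<close>

definition Tlin :: "('a::euclidean_space \<Rightarrow> 'a) \<Rightarrow> ('a \<Rightarrow> 'b::euclidean_space) \<Rightarrow> 'a \<Rightarrow> 'a" where
  "Tlin DP DG v = (mp_pinv DP (DP v) - mp_pinv DG (DG (mp_pinv DP (DP v)))) + mp_pinv DG (DG v)"

lemma Tmap_eq_Tlin: "Tmap P G x = Tlin (frechet_derivative P (at x)) (frechet_derivative G (at x))"
  unfolding Tmap_def Tlin_def Let_def ..

locale complementary_kernels =
  fixes DP :: "'a::euclidean_space \<Rightarrow> 'a" and DG :: "'a \<Rightarrow> 'b::euclidean_space"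
  assumes linear_DP: "linear DP" and linear_DG: "linear DG"
    and kernels_disjoint: "\<And>v. DP v = 0 \<Longrightarrow> DG v = 0 \<Longrightarrow> v = 0"
    and kernels_span: "\<And>u. \<exists>a b. DP a = 0 \<and> DG b = 0 \<and> u = a + b"

lemma complementary_kernelsI:
  assumes "linear DP" "linear DG" and "{v. DP v = 0} \<inter> {v. DG v = 0} = {0}"
    and "{a + b | a b. DP a = 0 \<and> DG b = 0} = UNIV"
  shows "complementary_kernels DP DG"
proof -
  have "\<exists>a b. DP a = 0 \<and> DG b = 0 \<and> u = a + b" for u
  proof -
    have "u \<in> {a + b | a b. DP a = 0 \<and> DG b = 0}" using assms(4) by simp
    then show ?thesis by blast
  qed
  then show ?thesis using assms unfolding complementary_kernels_def by blast
qed

context complementary_kernels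
begin

abbreviation T :: "'a \<Rightarrow> 'a" where "T \<equiv> Tlin DP DG"

lemma linear_T: "linear T"
proof -
  interpret P: linear DP by (rule linear_DP)
  interpret G: linear DG by (rule linear_DG)
  interpret P': linear "mp_pinv DP" by (rule linear_mp_pinv[OF linear_DP])
  interpret G': linear "mp_pinv DG" by (rule linear_mp_pinv[OF linear_DG])
  show ?thesis
    by (rule linearI) (simp_all add: Tlin_def P.add G.add P'.add G'.add P.scale G.scale
        P'.scale G'.scale algebra_simps)
qed

lemma T_eq_0D:
  assumes "T v = 0"
  shows "v = 0"
proof -
  define p where "p = mp_pinv DP (DP v)"
  define q where "q = mp_pinv DG (DG v)"
  define r where "r = p - mp_pinv DG (DG p)"
  have "DG r = 0"
    unfolding r_def by (simp add: linear_diff[OF linear_DG] mp_pinv_right_inverse[OF linear_DG])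
  then have "q \<bullet> r = 0" unfolding q_def by (rule mp_pinv_orthogonal_kernel[OF linear_DG])
  moreover have "r = - q" using assms unfolding Tlin_def r_def p_def q_def by (simp add: eq_neg_iff_add_eq_0)
  ultimately have r: "r = 0" and "q = 0" by (simp_all add: inner_commute)
  then have DGv: "DG v = 0"
    using mp_pinv_right_inverse[OF linear_DG, of "DG v"] linear_0[OF linear_DG] unfolding q_def by simp
  have "p \<bullet> u = 0" for u
  proof -
    obtain a b where ab: "DP a = 0" "DG b = 0" "u = a + b" using kernels_span by blast
    have "p \<bullet> a = 0" unfolding p_def using linear_DP ab(1) by (rule mp_pinv_orthogonal_kernel)
    moreover have "p = mp_pinv DG (DG p)" using r unfolding r_def by simp
    then have "p \<bullet> b = 0" by (metis mp_pinv_orthogonal_kernel[OF linear_DG ab(2)])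
    ultimately show ?thesis using ab(3) by (simp add: inner_add_right)
  qed
  then have "p = 0" by (metis inner_eq_zero_iff)
  then have "DP v = 0"
    using mp_pinv_right_inverse[OF linear_DP, of "DP v"] linear_0[OF linear_DP] unfolding p_def by simp
  then show ?thesis using DGv by (rule kernels_disjoint)
qed

lemma inj_T: "inj T"
  using T_eq_0D linear_T by (simp add: linear_inj_iff_eq_0)

lemma T_kernel_orthogonal:
  assumes "DP v = 0" "DG w = 0"
  shows "T v \<bullet> w = 0"
proof -
  have "T v = mp_pinv DG (DG v)"
    unfolding Tlin_def using assms linear_0[OF linear_mp_pinv[OF linear_DP]]
      linear_0[OF linear_mp_pinv[OF linear_DG]] linear_0[OF linear_DG] by simp
  then show ?thesis using mp_pinv_orthogonal_kernel[OF linear_DG assms(2)] by simp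
qed

lemma T_preserves_kernel_DG:
  assumes "DG v = 0"
  shows "DG (T v) = 0"
  unfolding Tlin_def using assms linear_0[OF linear_mp_pinv[OF linear_DG]]
  by (simp add: linear_diff[OF linear_DG] linear_add[OF linear_DG] mp_pinv_right_inverse[OF linear_DG])

lemma dim_range_DP: "dim (range DP) = dim {v. DG v = 0}"
proof -
  let ?KP = "{v. DP v = 0}" and ?KG = "{v. DG v = 0}"
  have "dim {a + b |a b. a \<in> ?KP \<and> b \<in> ?KG} + dim (?KP \<inter> ?KG) = dim ?KP + dim ?KG"
    by (intro dim_sums_Int linear_subspace_kernel linear_DP linear_DG)
  moreover have "{a + b |a b. a \<in> ?KP \<and> b \<in> ?KG} = UNIV" using kernels_span by blast
  moreover have "?KP \<inter> ?KG = {0}"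
    using kernels_disjoint linear_0[OF linear_DP] linear_0[OF linear_DG] by blast
  ultimately show ?thesis using rank_nullity[OF linear_DP] by simp
qed

lemma inv_T_mp_pinv_conj_projection:
  assumes idem: "\<And>v. DP (DP v) = DP v" and range_DP: "\<And>v. DG (DP v) = 0"
  shows "inv T (mp_pinv (T \<circ> DP \<circ> inv T) (T y)) = DP y"
proof (rule mp_pinv_conj_projection[OF linear_DP idem linear_T inj_T])
  have absorb: "T (DP a) \<bullet> T b = T (DP a) \<bullet> T (DP b)" for a b
  proof -
    have "T (b - DP b) \<bullet> T (DP a) = 0"
      by (intro T_kernel_orthogonal T_preserves_kernel_DG range_DP)
        (simp add: linear_diff[OF linear_DP] idem)
    then have "T b \<bullet> T (DP a) = T (DP b) \<bullet> T (DP a)"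
      by (simp add: linear_diff[OF linear_T] inner_diff_left)
    then show ?thesis by (simp add: inner_commute)
  qed
  have surj: "surj T" using linear_T inj_T by (simp add: linear_injective_imp_surjective)
  fix x y
  obtain a b where "x = T a" "y = T b" using surj by (metis surjD)
  then show "T (DP (inv T x)) \<bullet> y = x \<bullet> T (DP (inv T y))"
    using absorb[of a b] absorb[of b a] inj_T by (simp add: inv_f_f inner_commute)
qed

end

section \<open>Derivatives of a retraction\<close>

lemma C1_on_has_derivative:
  "C1_on S f \<Longrightarrow> x \<in> S \<Longrightarrow> (f has_derivative frechet_derivative f (at x)) (at x)"
  unfolding C1_on_def by (metis frechet_derivative_at)

lemma chain_rule_on_open:
  assumes S: "open S" "x \<in> S" and P: "(P has_derivative P') (at x)"
    and F: "(F has_derivative F') (at (P x))" and H: "(H has_derivative H') (at x)"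
    and FP: "\<And>y. y \<in> S \<Longrightarrow> F (P y) = H y"
  shows "F' (P' v) = H' v"
proof -
  have "(H has_derivative F' \<circ> P') (at x)"
    using diff_chain_at[OF P F] S by (rule has_derivative_transform_within_open) (simp add: FP)
  then show ?thesis using has_derivative_unique[OF H] by auto
qed

lemma retraction_derivative_fixes_tangent:
  assumes v: "v \<in> tangent_space M z" and P: "(P has_derivative P') (at z)"
    and retract: "\<And>y. y \<in> M \<Longrightarrow> P y = y"
  shows "P' v = v"
proof -
  obtain \<gamma> :: "real \<Rightarrow> 'a" where "\<gamma> 0 = z" and \<gamma>M: "\<And>t. \<gamma> t \<in> M"
    and \<gamma>: "(\<gamma> has_vector_derivative v) (at 0)"
    using v unfolding tangent_space_def by blast
  then have "(P has_derivative P') (at (\<gamma> 0) within range \<gamma>)"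
    using P by (simp add: has_derivative_at_withinI)
  then have "((P \<circ> \<gamma>) has_vector_derivative P' v) (at 0)"
    using vector_derivative_diff_chain_within[of \<gamma> v 0 UNIV P] \<gamma> by simp
  moreover have "P \<circ> \<gamma> = \<gamma>" using \<gamma>M retract by (simp add: fun_eq_iff)
  ultimately show ?thesis using \<gamma> vector_derivative_unique_at by metis
qed

theorem proposition5:
  fixes k :: nat
    and B M :: "(real^'n) set"
    and G :: "real^'n \<Rightarrow> real^'m"
    and P g :: "real^'n \<Rightarrow> real^'n"
  assumes k_pos: "0 < k" and k_lt: "k < CARD('n)"
    and dim_m: "CARD('m) = CARD('n) - k"
    and B_open: "open B" and B_conn: "connected B"
    and M_sub: "M \<subseteq> B" and M_compact: "compact M" and M_conn: "connected M"
    and M_ne: "M \<noteq> {}"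
    and g_smooth: "\<exists>U gext. open U \<and> M \<subseteq> U \<and> C1_on U gext \<and> (\<forall>x\<in>M. gext x = g x)"
    and g_tangent: "\<forall>x\<in>M. g x \<in> tangent_space M x"
    and A1_C1: "C1_on B G"
    and A1_subm: "\<forall>x\<in>B. surj (frechet_derivative G (at x))"
    and A1_zero: "{x\<in>B. G x = 0} = M"
    and A2_C1: "C1_on B P"
    and A2_into: "P ` B \<subseteq> M"
    and A2_id: "\<forall>x\<in>M. P x = x"
    and A3: "\<forall>x\<in>B. {v. frechet_derivative P (at x) v = 0} \<inter> {v. frechet_derivative G (at x) v = 0} = {0}
              \<and> {a + b | a b. frechet_derivative P (at x) a = 0 \<and> frechet_derivative G (at x) b = 0} = UNIV"
  shows "(\<forall>x\<in>B. frechet_derivative P (at x) (f_h P G g x) = g (P x))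
       \<and> (\<forall>x\<in>M. f_h P G g x = g x)"
proof -
  let ?DP = "\<lambda>x. frechet_derivative P (at x)" and ?DG = "\<lambda>x. frechet_derivative G (at x)"
  have DP: "(P has_derivative ?DP x) (at x)" and DG: "(G has_derivative ?DG x) (at x)"
    if "x \<in> B" for x
    using A2_C1 A1_C1 that by (simp_all add: C1_on_has_derivative)
  have PB: "P x \<in> M" "P x \<in> B" if "x \<in> B" for x using A2_into M_sub that by auto
  have kernels: "complementary_kernels (?DP x) (?DG x)" if "x \<in> B" for x
    using A3 that DP[OF that, THEN has_derivative_linear] DG[OF that, THEN has_derivative_linear]
    by (simp add: complementary_kernelsI)
  have rank: "dim (range (?DP x)) = CARD('n) - CARD('m)" if "x \<in> B" for x
    using rank_nullity[OF DG[OF that, THEN has_derivative_linear]] A1_subm that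
      complementary_kernels.dim_range_DP[OF kernels[OF that]] by simp
  have DP_idem: "?DP (P x) (?DP x v) = ?DP x v" if "x \<in> B" for x v
    using that by (intro chain_rule_on_open[OF B_open _ DP DP DP]) (simp_all add: PB A2_id)
  have DG_DP: "?DG (P x) (?DP x v) = 0" if "x \<in> B" for x v
    using that A1_zero
    by (intro chain_rule_on_open[OF B_open _ DP DG has_derivative_const]) (auto simp: PB)
  have tangent: "?DP z (g z) = g z" if "z \<in> M" for z
    using that g_tangent M_sub A2_id
    by (intro retraction_derivative_fixes_tangent[OF _ DP]) auto
  show ?thesis
  proof (intro conjI ballI)
    fix x assume x: "x \<in> B"
    interpret Tx: complementary_kernels "?DP x" "?DG x" by (rule kernels[OF x])
    interpret TPx: complementary_kernels "?DP (P x)" "?DG (P x)" by (rule kernels[OF PB(2)[OF x]])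
    have "range (?DP x) = range (?DP (P x))"
      using rank[OF x] rank[OF PB(2)[OF x]]
      by (intro range_eq_if_absorbing Tx.linear_DP TPx.linear_DP DP_idem x) simp
    then have "g (P x) \<in> range (?DP x)" using tangent[OF PB(1)[OF x]] by (metis rangeI)
    then show "?DP x (f_h P G g x) = g (P x)"
      unfolding f_h_def Let_def Tmap_eq_Tlin
      by (intro mp_pinv_conj_right_inverse Tx.linear_DP Tx.linear_T Tx.inj_T TPx.linear_T TPx.inj_T)
  next
    fix x assume x: "x \<in> M"
    then have "x \<in> B" and Px: "P x = x" using M_sub A2_id by auto
    interpret Tx: complementary_kernels "?DP x" "?DG x" by (rule kernels[OF \<open>x \<in> B\<close>])
    have "f_h P G g x = ?DP x (g x)"
      unfolding f_h_def Let_def Tmap_eq_Tlin Px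
      by (rule Tx.inv_T_mp_pinv_conj_projection)
        (use DP_idem[OF \<open>x \<in> B\<close>] DG_DP[OF \<open>x \<in> B\<close>] in \<open>simp_all add: Px\<close>)
    then show "f_h P G g x = g x" using tangent[OF x] by simp
  qed
qed

end
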